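(* For any time warps $f,g$ and any $p\in\overline{\omega}$: (a) $(f\backslash g)(p)=0$ if $p=0$; $(f\backslash g)(p)=\bigvee\{q\in\overline{\omega}\mid f(q)\le g(p)\}$ if $p\in\omega\setminus\{0\}$; and $(f\backslash g)(p)=\bigvee\{q\in\overline{\omega}\mid \exists m\in\omega\,(f(q)\le g(m))\}$ if $p=\omega$. (b) $(g/f)(p)=\bigwedge\{g(q)\mid q\in\overline{\omega},\ p\le f(q)\}$ (with $\bigwedge\emptyset=\omega$).
   Context: Let $\overline{\omega}=\omega\cup\{\omega\}$ be the natural numbers with a top element $\omega$ adjoined, with its natural total order. A time warp is a monotone map $f\colon\overline{\omega}\to\overline{\omega}$ with $f(0)=0$ and $f(\omega)=\bigvee\{f(n)\mid n\in\omega\}$. The set $W$ of time warps is ordered pointwise; $fg:=f\circ g$. The residuals $\backslash,/$ are the binary operations on $W$ satisfying, for all $f,g,h\in W$: $f\le h/g \iff fg\le h \iff g\le f\backslash h$. *)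

theory Defs
  imports Main "HOL-Library.Extended_Nat"
begin

text \<open>The extended naturals omega-bar are modelled by enat (top element is \<infinity>).\<close>

definition time_warp :: "(enat \<Rightarrow> enat) \<Rightarrow> bool" where
  "time_warp f \<longleftrightarrow> mono f \<and> f 0 = 0 \<and> f \<infinity> = (SUP n::nat. f (enat n))"

definition W :: "(enat \<Rightarrow> enat) set" where
  "W = {f. time_warp f}"

end

theory Submission
  imports Defs
begin

text \<open>For \<open>f\<close> a time warp, \<open>f\<close> commutes with suprema, so the
  pointwise largest \<open>k\<close> with \<open>f \<circ> k \<le> g\<close> is \<open>k p = \<Squnion>{q. f q \<le> g p}\<close>, corrected at \<open>0\<close> and
  \<open>\<infinity>\<close> to make it a time warp; dually \<open>(g / f) p = \<Sqinter>{g q | q. p \<le> f q}\<close>, which is continuous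
  at \<open>\<infinity>\<close> because, by continuity of \<open>g\<close>, the infima below a finite bound are all attained
  at arguments below one common \<open>q\<^sub>0\<close>, forcing \<open>f q\<^sub>0 = \<infinity>\<close>. The residuals of the
  statement are determined by their Galois property, so they coincide with these.\<close>

lemma time_warpD:
  assumes "time_warp f"
  shows "mono f" and "f 0 = 0" and "f \<infinity> = (SUP n::nat. f (enat n))"
  using assms by (simp_all add: time_warp_def)

lemma time_warp_Sup:
  assumes "time_warp f"
  shows "f (Sup S) = (SUP q\<in>S. f q)"
proof (cases "S = {}")
  case True
  then show ?thesis using time_warpD(2)[OF assms] by (simp add: bot_enat_def)
next
  case nonempty: False
  have mono: "mono f" using assms by (rule time_warpD)
  have upper: "(SUP q\<in>S. f q) \<le> f (Sup S)"
    using mono by (intro SUP_least) (simp add: Sup_upper monoD)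
  show ?thesis
  proof (cases "finite S")
    case True
    then have "Sup S \<in> S" using nonempty by (simp add: Sup_enat_def)
    then have "f (Sup S) \<le> (SUP q\<in>S. f q)" by (rule SUP_upper)
    then show ?thesis using upper by (rule antisym)
  next
    case False
    then have "Sup S = \<infinity>" using nonempty by (simp add: Sup_enat_def)
    have "f \<infinity> = (SUP n::nat. f (enat n))" using assms by (rule time_warpD)
    also have "\<dots> \<le> (SUP q\<in>S. f q)"
    proof (rule SUP_least)
      fix n :: nat
      obtain q where q: "q \<in> S" "enat n \<le> q"
        using False finite_enat_bounded[of S n] by (meson linear)
      then have "f (enat n) \<le> f q" using mono by (simp add: monoD)
      also have "\<dots> \<le> (SUP q\<in>S. f q)" using q by (intro SUP_upper)
      finally show "f (enat n) \<le> (SUP q\<in>S. f q)" .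
    qed
    finally show ?thesis using upper \<open>Sup S = \<infinity>\<close> by (simp add: antisym)
  qed
qed

text \<open>A uniform formula, which for monotone \<open>g\<close> reduces to the piecewise one of the
  statement (lemma \<open>time_warp_ldiv_eq\<close>); the case \<open>p = 0\<close> must be excluded since
  \<open>f\<close> may vanish on an initial segment.\<close>

definition time_warp_ldiv :: "(enat \<Rightarrow> enat) \<Rightarrow> (enat \<Rightarrow> enat) \<Rightarrow> enat \<Rightarrow> enat" where
  "time_warp_ldiv f g p =
     (if p = 0 then 0 else Sup {q. \<exists>m::nat. enat m \<le> p \<and> f q \<le> g (enat m)})"

definition time_warp_rdiv :: "(enat \<Rightarrow> enat) \<Rightarrow> (enat \<Rightarrow> enat) \<Rightarrow> enat \<Rightarrow> enat" where
  "time_warp_rdiv g f p = Inf {g q | q. p \<le> f q}"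

lemma time_warp_ldiv_in_W: "time_warp_ldiv f g \<in> W"
proof -
  have mono: "mono (time_warp_ldiv f g)"
    unfolding time_warp_ldiv_def
    by (rule monoI) (auto intro!: Sup_subset_mono intro: order_trans)
  have "time_warp_ldiv f g \<infinity> \<le> (SUP n::nat. time_warp_ldiv f g (enat n))"
    unfolding time_warp_ldiv_def[of f g \<infinity>]
  proof (simp, rule Sup_least, clarify)
    fix q m assume "f q \<le> g (enat m)"
    then have "q \<le> time_warp_ldiv f g (enat (Suc m))"
      unfolding time_warp_ldiv_def by (auto simp: zero_enat_def intro!: Sup_upper exI[of _ m])
    also have "\<dots> \<le> (SUP n::nat. time_warp_ldiv f g (enat n))" by (rule SUP_upper) simp
    finally show "q \<le> (SUP n::nat. time_warp_ldiv f g (enat n))" .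
  qed
  moreover have "(SUP n::nat. time_warp_ldiv f g (enat n)) \<le> time_warp_ldiv f g \<infinity>"
    using mono by (intro SUP_least) (simp add: monoD)
  ultimately show ?thesis
    using mono by (simp add: W_def time_warp_def antisym time_warp_ldiv_def)
qed

lemma comp_le_iff_le_time_warp_ldiv:
  assumes f: "time_warp f" and g: "mono g" and h: "time_warp h"
  shows "f \<circ> h \<le> g \<longleftrightarrow> h \<le> time_warp_ldiv f g"
proof
  assume fh: "f \<circ> h \<le> g"
  have le_at_enat: "h (enat n) \<le> time_warp_ldiv f g (enat n)" for n
  proof (cases "n = 0")
    case True
    then show ?thesis using time_warpD(2)[OF h] by (simp add: zero_enat_def[symmetric])
  next
    case False
    have "f (h (enat n)) \<le> g (enat n)" using fh by (metis comp_apply le_funD)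
    then show ?thesis
      using False unfolding time_warp_ldiv_def by (auto simp: zero_enat_def intro!: Sup_upper)
  qed
  have "h \<infinity> \<le> time_warp_ldiv f g \<infinity>"
    using time_warpD(3)[OF h] time_warpD(3)[of "time_warp_ldiv f g"] time_warp_ldiv_in_W le_at_enat
    by (simp add: W_def SUP_mono')
  with le_at_enat show "h \<le> time_warp_ldiv f g"
    by (metis enat.exhaust le_funI)
next
  assume h_le: "h \<le> time_warp_ldiv f g"
  show "f \<circ> h \<le> g"
  proof (rule le_funI)
    fix p
    have "f (h p) \<le> f (time_warp_ldiv f g p)"
      by (rule monoD[OF time_warpD(1)[OF f] le_funD[OF h_le]])
    also have "\<dots> \<le> g p"
    proof (cases "p = 0")
      case True
      then show ?thesis using time_warpD(2)[OF f] by (simp add: time_warp_ldiv_def)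
    next
      case False
      have "f (time_warp_ldiv f g p) = (SUP q\<in>{q. \<exists>m::nat. enat m \<le> p \<and> f q \<le> g (enat m)}. f q)"
        using False by (simp add: time_warp_ldiv_def time_warp_Sup[OF f])
      also have "\<dots> \<le> g p"
        using g by (auto intro!: SUP_least dest: monoD intro: order_trans)
      finally show ?thesis .
    qed
    finally show "(f \<circ> h) p \<le> g p" by simp
  qed
qed

lemma time_warp_ldiv_eq:
  assumes "mono g"
  shows "time_warp_ldiv f g p =
           (if p = 0 then 0
            else if p = \<infinity> then Sup {q. \<exists>m::nat. f q \<le> g (enat m)}
            else Sup {q. f q \<le> g p})"
proof -
  have "g (enat m) \<le> g (enat n)" if "m \<le> n" for m n using assms that by (simp add: monoD)
  then have "{q. \<exists>m::nat. enat m \<le> enat n \<and> f q \<le> g (enat m)} = {q. f q \<le> g (enat n)}" for n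
    by (auto intro: order_trans)
  then show ?thesis by (cases p) (simp_all add: time_warp_ldiv_def)
qed

lemma time_warp_rdiv_attained:
  assumes "time_warp_rdiv g f p < \<infinity>"
  obtains q where "p \<le> f q" and "g q = time_warp_rdiv g f p"
proof -
  let ?S = "{g q | q. p \<le> f q}"
  have "?S \<noteq> {}"
  proof
    assume "?S = {}"
    then show False using assms by (simp only: time_warp_rdiv_def Inf_empty top_enat_def)
  qed
  then obtain x where "x \<in> ?S" by blast
  then have "Inf ?S \<in> ?S" by (rule wellorder_InfI)
  then show ?thesis using that by (auto simp: time_warp_rdiv_def)
qed

lemma time_warp_rdiv_in_W:
  assumes f: "time_warp f" and g: "time_warp g"
  shows "time_warp_rdiv g f \<in> W"
proof -
  let ?r = "time_warp_rdiv g f"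
  define L where "L = (SUP n::nat. ?r (enat n))"
  have mono: "mono ?r"
    unfolding time_warp_rdiv_def by (rule monoI) (auto intro!: Inf_superset_mono intro: order_trans)
  have "?r 0 \<le> g 0"
    unfolding time_warp_rdiv_def by (rule Inf_lower) auto
  then have zero: "?r 0 = 0" using time_warpD(2)[OF g] by simp
  have "?r \<infinity> \<le> L"
  proof (cases "L = \<infinity>")
    case False
    define q\<^sub>0 where "q\<^sub>0 = Sup {q. g q \<le> L}"
    have g_q\<^sub>0: "g q\<^sub>0 \<le> L"
      unfolding q\<^sub>0_def time_warp_Sup[OF g] by (rule SUP_least) simp
    have "enat n \<le> f q\<^sub>0" for n
    proof -
      have r_le: "?r (enat n) \<le> L" unfolding L_def by (rule SUP_upper) simp
      moreover have "L < \<infinity>" using False by (simp add: less_le)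
      ultimately have "?r (enat n) < \<infinity>" by (rule le_less_trans)
      then obtain q where q: "enat n \<le> f q" "g q = ?r (enat n)"
        by (rule time_warp_rdiv_attained)
      with r_le have "q \<le> q\<^sub>0" unfolding q\<^sub>0_def by (intro Sup_upper) simp
      then show ?thesis using q(1) time_warpD(1)[OF f] by (meson monoD order_trans)
    qed
    then have "f q\<^sub>0 = \<infinity>" by (metis Suc_n_not_le_n enat_ord_simps(1) not_infinity_eq)
    then have "?r \<infinity> \<le> g q\<^sub>0" unfolding time_warp_rdiv_def by (intro Inf_lower) auto
    with g_q\<^sub>0 show ?thesis by simp
  qed simp
  moreover have "L \<le> ?r \<infinity>"
    unfolding L_def using mono by (intro SUP_least) (simp add: monoD)
  ultimately show ?thesis using mono zero by (simp add: W_def time_warp_def L_def antisym)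
qed

lemma comp_le_iff_le_time_warp_rdiv:
  assumes "mono h"
  shows "h \<circ> f \<le> g \<longleftrightarrow> h \<le> time_warp_rdiv g f"
proof
  assume hf: "h \<circ> f \<le> g"
  show "h \<le> time_warp_rdiv g f"
    unfolding time_warp_rdiv_def
  proof (rule le_funI, rule Inf_greatest, clarify)
    fix p q assume "p \<le> f q"
    then have "h p \<le> h (f q)" by (rule monoD[OF assms])
    also have "\<dots> \<le> g q" using hf by (metis comp_apply le_funD)
    finally show "h p \<le> g q" .
  qed
next
  assume "h \<le> time_warp_rdiv g f"
  moreover have "time_warp_rdiv g f (f p) \<le> g p" for p
    unfolding time_warp_rdiv_def by (rule Inf_lower) auto
  ultimately show "h \<circ> f \<le> g" by (metis comp_apply le_fun_def order_trans)
qed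

theorem lemma2p1:
  fixes ldiv rdiv :: "(enat \<Rightarrow> enat) \<Rightarrow> (enat \<Rightarrow> enat) \<Rightarrow> (enat \<Rightarrow> enat)"
  assumes ldiv_W: "\<And>f h. f \<in> W \<Longrightarrow> h \<in> W \<Longrightarrow> ldiv f h \<in> W"
      and rdiv_W: "\<And>h g. h \<in> W \<Longrightarrow> g \<in> W \<Longrightarrow> rdiv h g \<in> W"
      and rres: "\<And>f g h. f \<in> W \<Longrightarrow> g \<in> W \<Longrightarrow> h \<in> W \<Longrightarrow> (f \<le> rdiv h g \<longleftrightarrow> f \<circ> g \<le> h)"
      and lres: "\<And>f g h. f \<in> W \<Longrightarrow> g \<in> W \<Longrightarrow> h \<in> W \<Longrightarrow> (g \<le> ldiv f h \<longleftrightarrow> f \<circ> g \<le> h)"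
      and f: "f \<in> W" and g: "g \<in> W"
  shows "(ldiv f g p =
           (if p = 0 then 0
            else if p = \<infinity> then Sup {q. \<exists>m::nat. f q \<le> g (enat m)}
            else Sup {q. f q \<le> g p})) \<and>
         rdiv g f p = Inf {g q | q. p \<le> f q}"
proof -
  have f_tw: "time_warp f" and g_tw: "time_warp g" using f g by (simp_all add: W_def)
  have ldiv_galois: "f \<circ> h \<le> g \<longleftrightarrow> h \<le> time_warp_ldiv f g" if "h \<in> W" for h
    using comp_le_iff_le_time_warp_ldiv f_tw time_warpD(1)[OF g_tw] that by (simp add: W_def)
  have rdiv_galois: "h \<circ> f \<le> g \<longleftrightarrow> h \<le> time_warp_rdiv g f" if "h \<in> W" for h
    using comp_le_iff_le_time_warp_rdiv that by (simp add: W_def time_warp_def)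
  have "ldiv f g = time_warp_ldiv f g"
    using lres[OF f _ g] ldiv_galois ldiv_W[OF f g] time_warp_ldiv_in_W by (blast intro: antisym)
  moreover have "rdiv g f = time_warp_rdiv g f"
    using rres[OF _ f g] rdiv_galois rdiv_W[OF g f] time_warp_rdiv_in_W[OF f_tw g_tw]
    by (blast intro: antisym)
  ultimately show ?thesis
    using time_warp_ldiv_eq[OF time_warpD(1)[OF g_tw]] by (simp add: time_warp_rdiv_def)
qed

end
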